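(* Let $e=(e_0,\dots,e_n)$ be a system of weights, $n\ge1$. Let $\mathbb P^{2n+1}(e,e)=\operatorname{Proj}k[T_0,\dots,T_n,T'_0,\dots,T'_n]$ with $\deg T_i=\deg T'_i=e_i$, let $L_1=V_+(T_0,\dots,T_n)$, $L_2=V_+(T'_0,\dots,T'_n)$, and $U_n(e)=\mathbb P^{2n+1}(e,e)\setminus(L_1\cup L_2)$. Then the morphism $$\pi_n(e)\colon U_n(e)\to\mathbb P^n(e)\times\mathbb P^n(e),\quad [t_0,\dots,t_n,t'_0,\dots,t'_n]\mapsto([t_0,\dots,t_n],[t'_0,\dots,t'_n])$$ is open.
   Context: A system of weights is a tuple of positive integers; the weighted projective space $\mathbb P^n(e)=\operatorname{Proj}(k[T_0,\dots,T_n])$ with $\deg T_i=e_i$, over an algebraically closed field $k$; its points are classes $[a_0,\dots,a_n]\neq0$ with $[a_i]\sim[t^{e_i}a_i]$, $t\in k^*$. *)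

theory Defs
  imports "HOL-Computational_Algebra.Polynomial" "HOL-Library.Poly_Mapping"
begin

text \<open>Multivariate polynomials over a field: finitely supported maps from
monomials (exponent vectors, variables indexed by nat) to coefficients.\<close>

type_synonym 'a mpoly = "(nat \<Rightarrow>\<^sub>0 nat) \<Rightarrow>\<^sub>0 'a"

definition vars_in :: "nat \<Rightarrow> 'a::zero mpoly \<Rightarrow> bool" where
  "vars_in m p \<longleftrightarrow> (\<forall>a\<in>Poly_Mapping.keys p. Poly_Mapping.keys a \<subseteq> {..<m})"

definition whom :: "(nat \<Rightarrow> nat) \<Rightarrow> nat \<Rightarrow> 'a::zero mpoly \<Rightarrow> bool" where
  "whom w d p \<longleftrightarrow> (\<forall>a\<in>Poly_Mapping.keys p. (\<Sum>i\<in>Poly_Mapping.keys a. w i * Poly_Mapping.lookup a i) = d)"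

definition peval :: "'a::comm_semiring_1 mpoly \<Rightarrow> (nat \<Rightarrow> 'a) \<Rightarrow> 'a" where
  "peval p x = (\<Sum>a\<in>Poly_Mapping.keys p. Poly_Mapping.lookup p a * (\<Prod>i\<in>Poly_Mapping.keys a. x i ^ Poly_Mapping.lookup a i))"

definition affpts :: "nat \<Rightarrow> (nat \<Rightarrow> 'a::zero) set" where
  "affpts m = {x. \<forall>i\<ge>m. x i = 0}"

definition orbit :: "(nat \<Rightarrow> nat) \<Rightarrow> (nat \<Rightarrow> 'a::field) \<Rightarrow> (nat \<Rightarrow> 'a) set" where
  "orbit w x = {(\<lambda>i. t ^ w i * x i) | t. t \<noteq> 0}"

definition WP :: "(nat \<Rightarrow> nat) \<Rightarrow> nat \<Rightarrow> (nat \<Rightarrow> 'a::field) set set" where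
  "WP w m = {orbit w x | x. x \<in> affpts m \<and> x \<noteq> (\<lambda>_. 0)}"

definition wp_closed :: "(nat \<Rightarrow> nat) \<Rightarrow> nat \<Rightarrow> (nat \<Rightarrow> 'a::field) set set \<Rightarrow> bool" where
  "wp_closed w m Z \<longleftrightarrow> (\<exists>F::'a mpoly set. (\<forall>f\<in>F. vars_in m f \<and> (\<exists>d. whom w d f)) \<and>
      Z = {P \<in> WP w m. \<forall>x\<in>P. \<forall>f\<in>F. peval f x = 0})"

definition wp_open :: "(nat \<Rightarrow> nat) \<Rightarrow> nat \<Rightarrow> (nat \<Rightarrow> 'a::field) set set \<Rightarrow> bool" where
  "wp_open w m U \<longleftrightarrow> U \<subseteq> WP w m \<and> wp_closed w m (WP w m - U)"

text \<open>Weights (e,e) on variables T_0..T_n, T'_0..T'_n indexed 0..2n+1.\<close>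
definition ww :: "(nat \<Rightarrow> nat) \<Rightarrow> nat \<Rightarrow> nat \<Rightarrow> nat" where
  "ww e n i = (if i \<le> n then e i else e (i - Suc n))"

definition first_part :: "nat \<Rightarrow> (nat \<Rightarrow> 'a::zero) \<Rightarrow> nat \<Rightarrow> 'a" where
  "first_part n z = (\<lambda>i. if i \<le> n then z i else 0)"

definition second_part :: "nat \<Rightarrow> (nat \<Rightarrow> 'a::zero) \<Rightarrow> nat \<Rightarrow> 'a" where
  "second_part n z = (\<lambda>i. if i \<le> n then z (i + Suc n) else 0)"

definition join :: "nat \<Rightarrow> (nat \<Rightarrow> 'a) \<Rightarrow> (nat \<Rightarrow> 'a) \<Rightarrow> nat \<Rightarrow> 'a" where
  "join n x y = (\<lambda>i. if i \<le> n then x i else y (i - Suc n))"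

definition Un_e :: "(nat \<Rightarrow> nat) \<Rightarrow> nat \<Rightarrow> (nat \<Rightarrow> 'a::field) set set" where
  "Un_e e n = {P \<in> WP (ww e n) (2*n+2).
      \<forall>z\<in>P. first_part n z \<noteq> (\<lambda>_. 0) \<and> second_part n z \<noteq> (\<lambda>_. 0)}"

definition pi_e :: "(nat \<Rightarrow> nat) \<Rightarrow> nat \<Rightarrow> (nat \<Rightarrow> 'a::field) set
                    \<Rightarrow> (nat \<Rightarrow> 'a) set \<times> (nat \<Rightarrow> 'a) set" where
  "pi_e e n P = (let z = (SOME z. z \<in> P) in
       (orbit e (first_part n z), orbit e (second_part n z)))"

text \<open>Bigrading weights on k[T,T'] for the product P^n(e) x P^n(e).\<close>
definition w1 :: "(nat \<Rightarrow> nat) \<Rightarrow> nat \<Rightarrow> nat \<Rightarrow> nat" where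
  "w1 e n i = (if i \<le> n then e i else 0)"

definition w2 :: "(nat \<Rightarrow> nat) \<Rightarrow> nat \<Rightarrow> nat \<Rightarrow> nat" where
  "w2 e n i = (if i \<le> n then 0 else e (i - Suc n))"

definition prod_closed :: "(nat \<Rightarrow> nat) \<Rightarrow> nat
     \<Rightarrow> ((nat \<Rightarrow> 'a::field) set \<times> (nat \<Rightarrow> 'a) set) set \<Rightarrow> bool" where
  "prod_closed e n Z \<longleftrightarrow> (\<exists>F::'a mpoly set.
      (\<forall>f\<in>F. vars_in (2*n+2) f \<and> (\<exists>d1 d2. whom (w1 e n) d1 f \<and> whom (w2 e n) d2 f)) \<and>
      Z = {(P,Q). P \<in> WP e (Suc n) \<and> Q \<in> WP e (Suc n) \<and>
              (\<forall>x\<in>P. \<forall>y\<in>Q. \<forall>f\<in>F. peval f (join n x y) = 0)})"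

definition prod_open :: "(nat \<Rightarrow> nat) \<Rightarrow> nat
     \<Rightarrow> ((nat \<Rightarrow> 'a::field) set \<times> (nat \<Rightarrow> 'a) set) set \<Rightarrow> bool" where
  "prod_open e n V \<longleftrightarrow> V \<subseteq> WP e (Suc n) \<times> WP e (Suc n) \<and>
      prod_closed e n (WP e (Suc n) \<times> WP e (Suc n) - V)"

end

(*
  The fibre of pi over (P, Q) consists of the classes of the points join x y with x in P and
  y in Q.  Hence, if the complement of V is cut out by weighted homogeneous polynomials F,
  the complement of the image of V is the set of (P, Q) on which every f in F vanishes at all
  these points join x y.  That set of points is stable under scaling the first block of
  coordinates alone, so over an infinite field f vanishes on it iff each homogeneous component
  of f for the weights of the first block does; these components are bihomogeneous, so the
  complement of the image is closed.
*)

theory Submission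
  imports Defs
begin

definition wdeg :: "(nat \<Rightarrow> nat) \<Rightarrow> (nat \<Rightarrow>\<^sub>0 nat) \<Rightarrow> nat" where
  "wdeg w m = (\<Sum>i\<in>Poly_Mapping.keys m. w i * Poly_Mapping.lookup m i)"

definition wcomponent :: "(nat \<Rightarrow> nat) \<Rightarrow> 'a::zero mpoly \<Rightarrow> nat \<Rightarrow> 'a mpoly" where
  "wcomponent w f a =
     Abs_poly_mapping (\<lambda>m. if wdeg w m = a then Poly_Mapping.lookup f m else 0)"

lemma lookup_wcomponent:
  "Poly_Mapping.lookup (wcomponent w f a) m =
     (if wdeg w m = a then Poly_Mapping.lookup f m else 0)"
proof -
  have "{m. (if wdeg w m = a then Poly_Mapping.lookup f m else 0) \<noteq> 0}
          \<subseteq> {m. Poly_Mapping.lookup f m \<noteq> 0}"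
    by auto
  then have "finite {m. (if wdeg w m = a then Poly_Mapping.lookup f m else 0) \<noteq> 0}"
    using finite_subset finite_lookup by blast
  then show ?thesis
    unfolding wcomponent_def by simp
qed

lemma keys_wcomponent:
  "Poly_Mapping.keys (wcomponent w f a) = {m \<in> Poly_Mapping.keys f. wdeg w m = a}"
  by (auto simp: in_keys_iff lookup_wcomponent split: if_splits)

lemma wdeg_add: "wdeg (\<lambda>i. w i + w' i) m = wdeg w m + wdeg w' m"
  unfolding wdeg_def by (simp add: distrib_right sum.distrib)

lemma vars_in_wcomponent: "vars_in k f \<Longrightarrow> vars_in k (wcomponent w f a)"
  unfolding vars_in_def keys_wcomponent by auto

lemma whom_wcomponent: "whom w a (wcomponent w f a)"
  unfolding whom_def keys_wcomponent wdeg_def[symmetric] by auto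

lemma whom_wcomponent_complement:
  assumes "whom (\<lambda>i. w i + w' i) d f"
  shows "whom w' (d - a) (wcomponent w f a)"
  using assms unfolding whom_def keys_wcomponent wdeg_def[symmetric]
  by (auto simp: wdeg_add)

lemma peval_wcomponent:
  "peval (wcomponent w f a) z =
     (\<Sum>m\<in>{m \<in> Poly_Mapping.keys f. wdeg w m = a}.
        Poly_Mapping.lookup f m * (\<Prod>i\<in>Poly_Mapping.keys m. z i ^ Poly_Mapping.lookup m i))"
  unfolding peval_def keys_wcomponent by (rule sum.cong) (auto simp: lookup_wcomponent)

lemma prod_scaled_powers:
  "(\<Prod>i\<in>Poly_Mapping.keys m. (s ^ w i * z i) ^ Poly_Mapping.lookup m i) =
     s ^ wdeg w m * (\<Prod>i\<in>Poly_Mapping.keys m. z i ^ Poly_Mapping.lookup m i)"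
  unfolding wdeg_def power_sum by (simp add: power_mult_distrib prod.distrib power_mult)

lemma peval_scaled:
  "peval f (\<lambda>i. s ^ w i * z i) =
     (\<Sum>a\<in>wdeg w ` Poly_Mapping.keys f. s ^ a * peval (wcomponent w f a) z)"
proof -
  let ?t = "\<lambda>m. Poly_Mapping.lookup f m * (\<Prod>i\<in>Poly_Mapping.keys m. z i ^ Poly_Mapping.lookup m i)"
  have "peval f (\<lambda>i. s ^ w i * z i) = (\<Sum>m\<in>Poly_Mapping.keys f. s ^ wdeg w m * ?t m)"
    unfolding peval_def prod_scaled_powers by (simp add: mult.left_commute)
  also have "\<dots> = (\<Sum>a\<in>wdeg w ` Poly_Mapping.keys f.
                     \<Sum>m\<in>{m \<in> Poly_Mapping.keys f. wdeg w m = a}. s ^ wdeg w m * ?t m)"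
    by (rule sum.image_gen) simp
  also have "\<dots> = (\<Sum>a\<in>wdeg w ` Poly_Mapping.keys f. s ^ a * peval (wcomponent w f a) z)"
    unfolding peval_wcomponent sum_distrib_left by (rule sum.cong) auto
  finally show ?thesis .
qed

lemma peval_eq_sum_wcomponents:
  "peval f z = (\<Sum>a\<in>wdeg w ` Poly_Mapping.keys f. peval (wcomponent w f a) z)"
  using peval_scaled[of f 1 w z] by simp

lemma coeff_eq_zero_if_sum_powers_vanish:
  fixes c :: "nat \<Rightarrow> 'a::field"
  assumes "infinite (UNIV :: 'a set)" and "finite A" and "b \<in> A"
    and vanish: "\<And>s. s \<noteq> 0 \<Longrightarrow> (\<Sum>a\<in>A. s ^ a * c a) = 0"
  shows "c b = 0"
proof -
  define p where "p = (\<Sum>a\<in>A. monom (c a) a)"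
  have "UNIV - {0} \<subseteq> {s. poly p s = 0}"
    using vanish by (auto simp: p_def poly_sum poly_monom mult.commute)
  moreover have "infinite (UNIV - {0::'a})"
    using assms(1) by simp
  ultimately have "p = 0"
    using poly_roots_finite finite_subset by blast
  then have "coeff p b = 0"
    by simp
  moreover have "coeff p b = c b"
    unfolding p_def coeff_sum coeff_monom using assms(2,3) by (simp add: sum.delta)
  ultimately show ?thesis
    by simp
qed

lemma vanishing_iff_wcomponents_vanish:
  fixes S :: "(nat \<Rightarrow> 'a::field) set"
  assumes "infinite (UNIV :: 'a set)"
    and scaling_closed: "\<And>z t. z \<in> S \<Longrightarrow> t \<noteq> 0 \<Longrightarrow> (\<lambda>i. t ^ w i * z i) \<in> S"
  shows "(\<forall>z\<in>S. peval f z = 0) \<longleftrightarrow> (\<forall>a. \<forall>z\<in>S. peval (wcomponent w f a) z = 0)"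
proof
  assume vanish: "\<forall>z\<in>S. peval f z = 0"
  show "\<forall>a. \<forall>z\<in>S. peval (wcomponent w f a) z = 0"
  proof (intro allI ballI)
    fix a z assume "z \<in> S"
    show "peval (wcomponent w f a) z = 0"
    proof (cases "a \<in> wdeg w ` Poly_Mapping.keys f")
      case True
      show ?thesis
      proof (rule coeff_eq_zero_if_sum_powers_vanish[OF assms(1) _ True])
        fix s :: 'a assume "s \<noteq> 0"
        then show "(\<Sum>a\<in>wdeg w ` Poly_Mapping.keys f. s ^ a * peval (wcomponent w f a) z) = 0"
          using vanish scaling_closed[OF \<open>z \<in> S\<close>] by (simp flip: peval_scaled)
      qed simp
    next
      case False
      then show ?thesis
        unfolding peval_wcomponent by (auto intro: sum.neutral)
    qed
  qed
qed (metis peval_eq_sum_wcomponents sum.neutral)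

lemma infinite_UNIV_if_alg_closed:
  assumes alg_closed: "\<forall>p :: 'a::field poly. degree p > 0 \<longrightarrow> (\<exists>x. poly p x = 0)"
  shows "infinite (UNIV :: 'a set)"
proof
  assume fin: "finite (UNIV :: 'a set)"
  define q :: "'a poly" where "q = (\<Prod>a\<in>UNIV. [:-a, 1:]) + 1"
  have "degree (\<Prod>a::'a\<in>UNIV. [:-a, 1:]) = card (UNIV :: 'a set)"
    by (subst degree_prod_eq_sum_degree) auto
  moreover have "card (UNIV :: 'a set) > 0"
    using fin by (simp add: card_gt_0_iff)
  ultimately have "degree q > 0"
    unfolding q_def by (subst degree_add_eq_left) auto
  then obtain x where "poly q x = 0"
    using alg_closed by blast
  moreover have "poly (\<Prod>a::'a\<in>UNIV. [:-a, 1:]) x = 0"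
    using fin by (simp add: poly_prod prod_zero_iff)
  ultimately show False
    by (simp add: q_def)
qed

lemma scaled_in_orbit: "(t::'a::field) \<noteq> 0 \<Longrightarrow> (\<lambda>i. t ^ w i * x i) \<in> orbit w x"
  unfolding orbit_def by blast

lemma self_in_orbit: "x \<in> orbit w (x :: nat \<Rightarrow> 'a::field)"
  using scaled_in_orbit[of "1::'a" w x] by simp

lemma orbit_subset:
  assumes "y \<in> orbit w x"
  shows "orbit w y \<subseteq> orbit w (x :: nat \<Rightarrow> 'a::field)"
proof
  fix u assume "u \<in> orbit w y"
  then obtain s where "s \<noteq> 0" "u = (\<lambda>i. s ^ w i * y i)"
    unfolding orbit_def by blast
  moreover obtain t where "t \<noteq> 0" "y = (\<lambda>i. t ^ w i * x i)"
    using assms unfolding orbit_def by blast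
  ultimately show "u \<in> orbit w x"
    using scaled_in_orbit[of "s * t" w x] by (simp add: power_mult_distrib mult.assoc)
qed

lemma orbit_sym:
  assumes "y \<in> orbit w x"
  shows "x \<in> orbit w (y :: nat \<Rightarrow> 'a::field)"
proof -
  obtain t where t: "t \<noteq> 0" "y = (\<lambda>i. t ^ w i * x i)"
    using assms unfolding orbit_def by blast
  then have "x = (\<lambda>i. (1 / t) ^ w i * y i)"
    by (simp add: power_divide)
  then show ?thesis
    using scaled_in_orbit[of "1 / t" w y] t(1) by simp
qed

lemma orbit_eq: "y \<in> orbit w x \<Longrightarrow> orbit w y = orbit w (x :: nat \<Rightarrow> 'a::field)"
  by (meson orbit_subset orbit_sym subset_antisym)

lemma orbit_affpts: "y \<in> orbit w x \<Longrightarrow> x \<in> affpts m \<Longrightarrow> y \<in> affpts m"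
  unfolding orbit_def affpts_def by auto

lemma orbit_nonzero: "y \<in> orbit w x \<Longrightarrow> x \<noteq> (\<lambda>_. 0) \<Longrightarrow> y \<noteq> (\<lambda>_. (0::'a::field))"
  unfolding orbit_def by (auto simp: fun_eq_iff)

lemma WP_memD:
  "P \<in> WP w m \<Longrightarrow> y \<in> P \<Longrightarrow> P = orbit w y \<and> y \<in> affpts m \<and> y \<noteq> (\<lambda>_. 0)"
  unfolding WP_def using orbit_eq orbit_affpts orbit_nonzero by blast

lemma WP_ex_mem: "P \<in> WP w m \<Longrightarrow> \<exists>y. y \<in> P"
  unfolding WP_def using self_in_orbit by blast

lemma WP_scaled_mem: "P \<in> WP w m \<Longrightarrow> y \<in> P \<Longrightarrow> t \<noteq> 0 \<Longrightarrow> (\<lambda>i. t ^ w i * y i) \<in> P"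
  using WP_memD scaled_in_orbit by metis

lemma first_part_join: "x \<in> affpts (Suc n) \<Longrightarrow> first_part n (join n x y) = x"
  unfolding join_def first_part_def affpts_def by (auto simp: fun_eq_iff)

lemma second_part_join: "y \<in> affpts (Suc n) \<Longrightarrow> second_part n (join n x y) = y"
  unfolding join_def second_part_def affpts_def by (auto simp: fun_eq_iff)

lemma join_first_second_part:
  "z \<in> affpts (2*n+2) \<Longrightarrow> join n (first_part n z) (second_part n z) = z"
  unfolding join_def first_part_def second_part_def affpts_def by (auto simp: fun_eq_iff)

lemma first_part_affpts: "first_part n z \<in> affpts (Suc n)"
  unfolding first_part_def affpts_def by auto

lemma second_part_affpts: "second_part n z \<in> affpts (Suc n)"
  unfolding second_part_def affpts_def by auto

lemma join_affpts:
  "x \<in> affpts (Suc n) \<Longrightarrow> y \<in> affpts (Suc n) \<Longrightarrow> join n x y \<in> affpts (2*n+2)"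
  unfolding join_def affpts_def by auto

lemma join_nonzero: "x \<in> affpts (Suc n) \<Longrightarrow> x \<noteq> (\<lambda>_. 0) \<Longrightarrow> join n x y \<noteq> (\<lambda>_. 0)"
  unfolding join_def affpts_def by (auto simp: fun_eq_iff not_less_eq_eq)

lemma scaled_join_ww:
  "(\<lambda>i. (t::'a::comm_semiring_1) ^ ww e n i * join n x y i) =
     join n (\<lambda>i. t ^ e i * x i) (\<lambda>i. t ^ e i * y i)"
  unfolding join_def ww_def by (auto simp: fun_eq_iff)

lemma scaled_join_w1:
  "(\<lambda>i. (t::'a::comm_semiring_1) ^ w1 e n i * join n x y i) = join n (\<lambda>i. t ^ e i * x i) y"
  unfolding join_def w1_def by (auto simp: fun_eq_iff)

lemma ww_eq_w1_plus_w2: "ww e n = (\<lambda>i. w1 e n i + w2 e n i)"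
  unfolding ww_def w1_def w2_def by auto

lemma orbit_join_memE:
  fixes x y :: "nat \<Rightarrow> 'a::field"
  assumes "z \<in> orbit (ww e n) (join n x y)"
  obtains t where "t \<noteq> 0" "z = join n (\<lambda>i. t ^ e i * x i) (\<lambda>i. t ^ e i * y i)"
  using assms unfolding orbit_def scaled_join_ww by blast

lemma orbit_join_in_Un_e:
  fixes x y :: "nat \<Rightarrow> 'a::field"
  assumes x: "x \<in> affpts (Suc n)" "x \<noteq> (\<lambda>_. 0)"
    and y: "y \<in> affpts (Suc n)" "y \<noteq> (\<lambda>_. 0)"
  shows "orbit (ww e n) (join n x y) \<in> Un_e e n"
proof -
  have "orbit (ww e n) (join n x y) \<in> WP (ww e n) (2*n+2)"
    unfolding WP_def using join_affpts[OF x(1) y(1)] join_nonzero[OF x] by blast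
  moreover have "first_part n z \<noteq> (\<lambda>_. 0) \<and> second_part n z \<noteq> (\<lambda>_. 0)"
    if z: "z \<in> orbit (ww e n) (join n x y)" for z
  proof -
    obtain t :: 'a where t: "t \<noteq> 0" "z = join n (\<lambda>i. t ^ e i * x i) (\<lambda>i. t ^ e i * y i)"
      using z by (rule orbit_join_memE)
    have tx: "(\<lambda>i. t ^ e i * x i) \<in> orbit e x" and ty: "(\<lambda>i. t ^ e i * y i) \<in> orbit e y"
      using t(1) scaled_in_orbit by auto
    show ?thesis
      using t(2) first_part_join[OF orbit_affpts[OF tx x(1)]]
        second_part_join[OF orbit_affpts[OF ty y(1)]]
        orbit_nonzero[OF tx x(2)] orbit_nonzero[OF ty y(2)] by simp
  qed
  ultimately show ?thesis
    unfolding Un_e_def by blast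
qed

lemma Un_eE:
  assumes "R \<in> Un_e e n"
  obtains x y :: "nat \<Rightarrow> 'a::field"
  where "x \<in> affpts (Suc n)" "x \<noteq> (\<lambda>_. 0)" "y \<in> affpts (Suc n)" "y \<noteq> (\<lambda>_. 0)"
    and "R = orbit (ww e n) (join n x y)"
proof -
  have R: "R \<in> WP (ww e n) (2*n+2)"
    using assms unfolding Un_e_def by blast
  then obtain z where "z \<in> R"
    using WP_ex_mem by blast
  then have "R = orbit (ww e n) z" "z \<in> affpts (2*n+2)"
    "first_part n z \<noteq> (\<lambda>_. 0)" "second_part n z \<noteq> (\<lambda>_. 0)"
    using WP_memD[OF R] assms unfolding Un_e_def by auto
  then show ?thesis
    using that first_part_affpts second_part_affpts join_first_second_part by metis
qed

lemma pi_e_orbit_join: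
  fixes x y :: "nat \<Rightarrow> 'a::field"
  assumes x: "x \<in> affpts (Suc n)" and y: "y \<in> affpts (Suc n)"
  shows "pi_e e n (orbit (ww e n) (join n x y)) = (orbit e x, orbit e y)"
proof -
  define z where "z = (SOME z. z \<in> orbit (ww e n) (join n x y))"
  have "z \<in> orbit (ww e n) (join n x y)"
    unfolding z_def by (rule someI[of _ "join n x y"]) (rule self_in_orbit)
  then obtain t :: 'a where t: "t \<noteq> 0" "z = join n (\<lambda>i. t ^ e i * x i) (\<lambda>i. t ^ e i * y i)"
    by (rule orbit_join_memE)
  have tx: "(\<lambda>i. t ^ e i * x i) \<in> orbit e x" and ty: "(\<lambda>i. t ^ e i * y i) \<in> orbit e y"
    using t(1) scaled_in_orbit by auto
  have "first_part n z = (\<lambda>i. t ^ e i * x i)" "second_part n z = (\<lambda>i. t ^ e i * y i)"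
    using t(2) first_part_join[OF orbit_affpts[OF tx x]] second_part_join[OF orbit_affpts[OF ty y]]
    by simp_all
  then show ?thesis
    unfolding pi_e_def Let_def z_def[symmetric] using orbit_eq[OF tx] orbit_eq[OF ty] by simp
qed

lemma pi_e_image_subset:
  "pi_e e n ` Un_e e n \<subseteq> WP e (Suc n) \<times> (WP e (Suc n) :: (nat \<Rightarrow> 'a::field) set set)"
proof
  fix PQ assume "PQ \<in> pi_e e n ` (Un_e e n :: (nat \<Rightarrow> 'a) set set)"
  then obtain R where "R \<in> Un_e e n" "PQ = pi_e e n R"
    by blast
  then obtain x y :: "nat \<Rightarrow> 'a" where "x \<in> affpts (Suc n)" "x \<noteq> (\<lambda>_. 0)"
    "y \<in> affpts (Suc n)" "y \<noteq> (\<lambda>_. 0)" "PQ = (orbit e x, orbit e y)"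
    by (metis Un_eE pi_e_orbit_join)
  then show "PQ \<in> WP e (Suc n) \<times> WP e (Suc n)"
    unfolding WP_def by blast
qed

lemma pi_e_image_iff:
  fixes V :: "(nat \<Rightarrow> 'a::field) set set"
  assumes P: "P \<in> WP e (Suc n)" and Q: "Q \<in> WP e (Suc n)"
  shows "(P, Q) \<in> pi_e e n ` (V \<inter> Un_e e n) \<longleftrightarrow>
           (\<exists>x\<in>P. \<exists>y\<in>Q. orbit (ww e n) (join n x y) \<in> V)"
proof
  assume "(P, Q) \<in> pi_e e n ` (V \<inter> Un_e e n)"
  then obtain R where R: "R \<in> V" "R \<in> Un_e e n" "(P, Q) = pi_e e n R"
    by blast
  then obtain x y where x: "x \<in> affpts (Suc n)" "x \<noteq> (\<lambda>_. 0)"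
    and y: "y \<in> affpts (Suc n)" "y \<noteq> (\<lambda>_. 0)" and "R = orbit (ww e n) (join n x y)"
    by (elim Un_eE)
  then have "P = orbit e x" "Q = orbit e y"
    using R(3) pi_e_orbit_join[OF x(1) y(1)] by simp_all
  then show "\<exists>x\<in>P. \<exists>y\<in>Q. orbit (ww e n) (join n x y) \<in> V"
    using R(1) \<open>R = orbit (ww e n) (join n x y)\<close> self_in_orbit by blast
next
  assume "\<exists>x\<in>P. \<exists>y\<in>Q. orbit (ww e n) (join n x y) \<in> V"
  then obtain x y where "x \<in> P" "y \<in> Q" and V: "orbit (ww e n) (join n x y) \<in> V"
    by blast
  then have x: "P = orbit e x" "x \<in> affpts (Suc n)" "x \<noteq> (\<lambda>_. 0)"
    and y: "Q = orbit e y" "y \<in> affpts (Suc n)" "y \<noteq> (\<lambda>_. 0)"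
    using WP_memD[OF P \<open>x \<in> P\<close>] WP_memD[OF Q \<open>y \<in> Q\<close>] by simp_all
  have "pi_e e n (orbit (ww e n) (join n x y)) = (P, Q)"
    using pi_e_orbit_join[OF x(2) y(2)] x(1) y(1) by simp
  moreover have "orbit (ww e n) (join n x y) \<in> Un_e e n"
    using orbit_join_in_Un_e[OF x(2,3) y(2,3)] .
  ultimately show "(P, Q) \<in> pi_e e n ` (V \<inter> Un_e e n)"
    using V by (metis IntI image_eqI)
qed

lemma ball_orbit_join_iff:
  fixes P Q :: "(nat \<Rightarrow> 'a::field) set"
  assumes P: "P \<in> WP e (Suc n)" and Q: "Q \<in> WP e (Suc n)"
  shows "(\<forall>x\<in>P. \<forall>y\<in>Q. \<forall>z\<in>orbit (ww e n) (join n x y). \<Phi> z) \<longleftrightarrow>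
           (\<forall>x\<in>P. \<forall>y\<in>Q. \<Phi> (join n x y))"
proof (intro iffI ballI)
  fix x y
  assume "\<forall>x\<in>P. \<forall>y\<in>Q. \<forall>z\<in>orbit (ww e n) (join n x y). \<Phi> z" and "x \<in> P" "y \<in> Q"
  then show "\<Phi> (join n x y)"
    using self_in_orbit by blast
next
  fix x y z
  assume \<Phi>: "\<forall>x\<in>P. \<forall>y\<in>Q. \<Phi> (join n x y)"
    and "x \<in> P" "y \<in> Q" "z \<in> orbit (ww e n) (join n x y)"
  then obtain t where "t \<noteq> 0" "z = join n (\<lambda>i. t ^ e i * x i) (\<lambda>i. t ^ e i * y i)"
    by (elim orbit_join_memE)
  then show "\<Phi> z"
    using \<Phi> WP_scaled_mem[OF P \<open>x \<in> P\<close>] WP_scaled_mem[OF Q \<open>y \<in> Q\<close>] by blast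
qed

lemma pi_e_image_complement:
  fixes V :: "(nat \<Rightarrow> 'a::field) set set"
  assumes V: "WP (ww e n) (2*n+2) - V =
                {R \<in> WP (ww e n) (2*n+2). \<forall>z\<in>R. \<forall>f\<in>F. peval f z = 0}"
  shows "WP e (Suc n) \<times> WP e (Suc n) - pi_e e n ` (V \<inter> Un_e e n) =
           {(P, Q). P \<in> WP e (Suc n) \<and> Q \<in> WP e (Suc n) \<and>
              (\<forall>x\<in>P. \<forall>y\<in>Q. \<forall>f\<in>F. peval f (join n x y) = 0)}"
proof -
  have "(P, Q) \<notin> pi_e e n ` (V \<inter> Un_e e n) \<longleftrightarrow>
          (\<forall>x\<in>P. \<forall>y\<in>Q. \<forall>f\<in>F. peval f (join n x y) = 0)"
    if P: "P \<in> WP e (Suc n)" and Q: "Q \<in> WP e (Suc n)" for P Q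
  proof -
    have "(P, Q) \<notin> pi_e e n ` (V \<inter> Un_e e n) \<longleftrightarrow>
            (\<forall>x\<in>P. \<forall>y\<in>Q. orbit (ww e n) (join n x y) \<notin> V)"
      using pi_e_image_iff[OF P Q] by blast
    also have "\<dots> \<longleftrightarrow> (\<forall>x\<in>P. \<forall>y\<in>Q. \<forall>z\<in>orbit (ww e n) (join n x y). \<forall>f\<in>F. peval f z = 0)"
    proof (intro ball_cong refl)
      fix x y assume "x \<in> P" "y \<in> Q"
      have "orbit (ww e n) (join n x y) \<in> Un_e e n"
        using WP_memD[OF P \<open>x \<in> P\<close>] WP_memD[OF Q \<open>y \<in> Q\<close>] by (simp add: orbit_join_in_Un_e)
      then have R: "orbit (ww e n) (join n x y) \<in> WP (ww e n) (2*n+2)"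
        unfolding Un_e_def by blast
      then have "orbit (ww e n) (join n x y) \<notin> V \<longleftrightarrow>
                   orbit (ww e n) (join n x y) \<in> WP (ww e n) (2*n+2) - V"
        by blast
      also have "\<dots> \<longleftrightarrow> (\<forall>z\<in>orbit (ww e n) (join n x y). \<forall>f\<in>F. peval f z = 0)"
        using R unfolding V by simp
      finally show "orbit (ww e n) (join n x y) \<notin> V \<longleftrightarrow>
                      (\<forall>z\<in>orbit (ww e n) (join n x y). \<forall>f\<in>F. peval f z = 0)" .
    qed
    also have "\<dots> \<longleftrightarrow> (\<forall>x\<in>P. \<forall>y\<in>Q. \<forall>f\<in>F. peval f (join n x y) = 0)"
      by (rule ball_orbit_join_iff[OF P Q])
    finally show ?thesis .
  qed
  then show ?thesis
    by auto
qed

lemma join_vanishing_iff_w1_components_vanish: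
  fixes P Q :: "(nat \<Rightarrow> 'a::field) set"
  assumes "infinite (UNIV :: 'a set)" and P: "P \<in> WP e (Suc n)"
  shows "(\<forall>x\<in>P. \<forall>y\<in>Q. \<forall>f\<in>F. peval f (join n x y) = 0) \<longleftrightarrow>
           (\<forall>x\<in>P. \<forall>y\<in>Q. \<forall>g\<in>{wcomponent (w1 e n) f a | f a. f \<in> F}. peval g (join n x y) = 0)"
proof -
  define S where "S = {join n x y | x y. x \<in> P \<and> y \<in> Q}"
  have ball_S: "(\<forall>z\<in>S. R z) \<longleftrightarrow> (\<forall>x\<in>P. \<forall>y\<in>Q. R (join n x y))" for R
    unfolding S_def by blast
  have "(\<lambda>i. t ^ w1 e n i * z i) \<in> S" if "z \<in> S" "t \<noteq> 0" for z and t :: 'a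
  proof -
    obtain x y where "z = join n x y" "x \<in> P" "y \<in> Q"
      using \<open>z \<in> S\<close> unfolding S_def by blast
    then have "(\<lambda>i. t ^ w1 e n i * z i) = join n (\<lambda>i. t ^ e i * x i) y"
      by (simp add: scaled_join_w1)
    then show ?thesis
      using WP_scaled_mem[OF P \<open>x \<in> P\<close> \<open>t \<noteq> 0\<close>] \<open>y \<in> Q\<close> unfolding S_def by blast
  qed
  then have components: "(\<forall>z\<in>S. peval f z = 0) \<longleftrightarrow>
                           (\<forall>a. \<forall>z\<in>S. peval (wcomponent (w1 e n) f a) z = 0)" for f
    by (rule vanishing_iff_wcomponents_vanish[OF assms(1)])
  have "(\<forall>z\<in>S. \<forall>f\<in>F. peval f z = 0) \<longleftrightarrow> (\<forall>f\<in>F. \<forall>z\<in>S. peval f z = 0)"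
    by auto
  also have "\<dots> \<longleftrightarrow> (\<forall>f\<in>F. \<forall>a. \<forall>z\<in>S. peval (wcomponent (w1 e n) f a) z = 0)"
    by (rule ball_cong[OF refl components])
  also have "\<dots> \<longleftrightarrow> (\<forall>z\<in>S. \<forall>g\<in>{wcomponent (w1 e n) f a | f a. f \<in> F}. peval g z = 0)"
    by auto
  finally show ?thesis
    by (simp only: ball_S)
qed

lemma bihomogeneous_w1_components:
  assumes "\<forall>f\<in>F. vars_in (2*n+2) f \<and> (\<exists>d. whom (ww e n) d f)"
  shows "\<forall>g\<in>{wcomponent (w1 e n) f a | f a. f \<in> F}.
           vars_in (2*n+2) g \<and> (\<exists>d1 d2. whom (w1 e n) d1 g \<and> whom (w2 e n) d2 g)"
proof
  fix g assume "g \<in> {wcomponent (w1 e n) f a | f a. f \<in> F}"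
  then obtain f a where "f \<in> F" and g: "g = wcomponent (w1 e n) f a"
    by blast
  then obtain d where "vars_in (2*n+2) f" "whom (\<lambda>i. w1 e n i + w2 e n i) d f"
    using assms unfolding ww_eq_w1_plus_w2 by blast
  then have "vars_in (2*n+2) g" "whom (w1 e n) a g" "whom (w2 e n) (d - a) g"
    unfolding g by (simp_all add: vars_in_wcomponent whom_wcomponent whom_wcomponent_complement)
  then show "vars_in (2*n+2) g \<and> (\<exists>d1 d2. whom (w1 e n) d1 g \<and> whom (w2 e n) d2 g)"
    by blast
qed

theorem mainTheorem8:
  fixes e :: "nat \<Rightarrow> nat" and n :: nat
  assumes alg_closed: "\<forall>p :: 'a::field poly. degree p > 0 \<longrightarrow> (\<exists>x. poly p x = 0)"
    and n_ge: "n \<ge> 1"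
    and weights: "\<forall>i\<le>n. e i > 0"
  shows "\<forall>V :: (nat \<Rightarrow> 'a) set set. wp_open (ww e n) (2*n+2) V \<longrightarrow>
           prod_open e n (pi_e e n ` (V \<inter> Un_e e n))"
proof (intro allI impI)
  fix V :: "(nat \<Rightarrow> 'a) set set"
  assume "wp_open (ww e n) (2*n+2) V"
  then obtain F :: "'a mpoly set"
    where F: "\<forall>f\<in>F. vars_in (2*n+2) f \<and> (\<exists>d. whom (ww e n) d f)"
      and V: "WP (ww e n) (2*n+2) - V = {R \<in> WP (ww e n) (2*n+2). \<forall>z\<in>R. \<forall>f\<in>F. peval f z = 0}"
    unfolding wp_open_def wp_closed_def by blast
  define G where "G = {wcomponent (w1 e n) f a | f a. f \<in> F}"
  have "\<forall>g\<in>G. vars_in (2*n+2) g \<and> (\<exists>d1 d2. whom (w1 e n) d1 g \<and> whom (w2 e n) d2 g)"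
    using bihomogeneous_w1_components[OF F] unfolding G_def .
  moreover have "WP e (Suc n) \<times> WP e (Suc n) - pi_e e n ` (V \<inter> Un_e e n) =
      {(P, Q). P \<in> WP e (Suc n) \<and> Q \<in> WP e (Suc n) \<and>
               (\<forall>x\<in>P. \<forall>y\<in>Q. \<forall>g\<in>G. peval g (join n x y) = 0)}"
    unfolding pi_e_image_complement[OF V] G_def
    using join_vanishing_iff_w1_components_vanish[OF infinite_UNIV_if_alg_closed[OF alg_closed]]
    by (simp cong: conj_cong)
  moreover have "pi_e e n ` (V \<inter> Un_e e n) \<subseteq> WP e (Suc n) \<times> WP e (Suc n)"
    using pi_e_image_subset by blast
  ultimately show "prod_open e n (pi_e e n ` (V \<inter> Un_e e n))"
    unfolding prod_open_def prod_closed_def by blast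
qed

end
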